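(* Let $\tilde G$ be a disjoint set of pseudo-generators and let $\tilde H\subseteq\tilde G$ consist of $r$ distinct pseudo-generators. Then every operator in the pseudo-product of $\tilde H$ has weight at least $r$.
   Context: $\mathfrak P$ is the group of $N$-qubit Pauli operators modulo phases; $X_k,Z_k$ are the Pauli $X$, $Z$ on qubit $k$; $\mathcal G(T)$ is the set of all products of elements of $T$ (including the identity $I$). The weight of a Pauli operator is its number of non-identity tensor factors. A pseudo-generator is a set of one or two Pauli operators. A set $\tilde G$ of pseudo-generators is disjoint if for every $\tilde g\in\tilde G$ there is a qubit $k$ such that every operator in $\mathcal G(\tilde g)\setminus\{I\}$ anticommutes with $X_k$ or with $Z_k$ (or both), while both $X_k$ and $Z_k$ commute with every operator in $\bigcup_{\tilde g'\in\tilde G\setminus\{\tilde g\}}\mathcal G(\tilde g')$. The pseudo-product of a set of $r$ pseudo-generators $\tilde g_1,\dots,\tilde g_r$ is the set of all products $x_1x_2\cdots x_r$ with $x_j\in\mathcal G(\tilde g_j)\setminus\{I\}$ for each $j$. *)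

theory Defs
  imports Main
begin

text \<open>Single-qubit Pauli operators modulo phases.\<close>
datatype pauli1 = PI | PX | PY | PZ

fun pmul1 :: "pauli1 \<Rightarrow> pauli1 \<Rightarrow> pauli1" where
  "pmul1 PI b = b"
| "pmul1 a PI = a"
| "pmul1 PX PX = PI" | "pmul1 PY PY = PI" | "pmul1 PZ PZ = PI"
| "pmul1 PX PY = PZ" | "pmul1 PY PX = PZ"
| "pmul1 PY PZ = PX" | "pmul1 PZ PY = PX"
| "pmul1 PZ PX = PY" | "pmul1 PX PZ = PY"

definition anticomm1 :: "pauli1 \<Rightarrow> pauli1 \<Rightarrow> bool" where
  "anticomm1 a b \<longleftrightarrow> a \<noteq> PI \<and> b \<noteq> PI \<and> a \<noteq> b"

text \<open>N-qubit Pauli operators modulo phases; the qubits are the elements of a finite type 'q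
  (N = CARD('q)).\<close>
type_synonym 'q pauli = "'q \<Rightarrow> pauli1"

definition pid :: "'q pauli" where "pid = (\<lambda>_. PI)"

definition pmul :: "'q pauli \<Rightarrow> 'q pauli \<Rightarrow> 'q pauli" where
  "pmul P Q = (\<lambda>k. pmul1 (P k) (Q k))"

definition anticommutes :: "'q::finite pauli \<Rightarrow> 'q pauli \<Rightarrow> bool" where
  "anticommutes P Q \<longleftrightarrow> odd (card {k. anticomm1 (P k) (Q k)})"

definition commutes :: "'q::finite pauli \<Rightarrow> 'q pauli \<Rightarrow> bool" where
  "commutes P Q \<longleftrightarrow> \<not> anticommutes P Q"

definition Xop :: "'q \<Rightarrow> 'q pauli" where "Xop k = (\<lambda>j. if j = k then PX else PI)"
definition Zop :: "'q \<Rightarrow> 'q pauli" where "Zop k = (\<lambda>j. if j = k then PZ else PI)"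

definition weight :: "'q::finite pauli \<Rightarrow> nat" where
  "weight P = card {k. P k \<noteq> PI}"

inductive_set gen :: "'q pauli set \<Rightarrow> 'q pauli set" for T where
  gen_id: "pid \<in> gen T"
| gen_mul: "P \<in> gen T \<Longrightarrow> t \<in> T \<Longrightarrow> pmul P t \<in> gen T"

definition pseudo_generator :: "'q pauli set \<Rightarrow> bool" where
  "pseudo_generator g \<longleftrightarrow> card g = 1 \<or> card g = 2"

definition disjoint_pg :: "'q::finite pauli set set \<Rightarrow> bool" where
  "disjoint_pg G \<longleftrightarrow> (\<forall>g\<in>G. \<exists>k.
      (\<forall>P \<in> gen g - {pid}. anticommutes P (Xop k) \<or> anticommutes P (Zop k)) \<and>
      (\<forall>P \<in> (\<Union>g'\<in>G - {g}. gen g'). commutes (Xop k) P \<and> commutes (Zop k) P))"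

definition pseudo_product :: "'q pauli set list \<Rightarrow> 'q pauli set" where
  "pseudo_product hs = {foldr pmul xs pid | xs. list_all2 (\<lambda>x g. x \<in> gen g - {pid}) xs hs}"

end

theory Submission
  imports Defs
begin

text \<open>Disjointness attaches to each pseudo-generator g a qubit k on which every non-identity
  element of \<G>(g) acts non-trivially, while every element of the other \<G>(g') acts as the
  identity (it commutes with both X_k and Z_k). For distinct g_1, ..., g_r these qubits are
  therefore distinct, and a pseudo-product x_1 \<cdots> x_r acts on the qubit of g_i exactly as x_i,
  i.e. non-trivially. So it has at least r non-identity factors.\<close>

lemma anticomm1_sym: "anticomm1 a b \<longleftrightarrow> anticomm1 b a"
  by (auto simp: anticomm1_def)

lemma anticommutes_sym: "anticommutes P Q \<longleftrightarrow> anticommutes Q (P :: 'q::finite pauli)"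
  by (simp add: anticommutes_def anticomm1_sym)

lemma anticommutes_single_site:
  "anticommutes (P :: 'q::finite pauli) (\<lambda>j. if j = k then a else PI) \<longleftrightarrow> anticomm1 (P k) a"
proof -
  have "{j. anticomm1 (P j) (if j = k then a else PI)} = (if anticomm1 (P k) a then {k} else {})"
    by (auto simp: anticomm1_def)
  then show ?thesis
    by (simp add: anticommutes_def)
qed

lemma anticommutes_Xop_Zop_iff:
  "anticommutes P (Xop k) \<or> anticommutes P (Zop k) \<longleftrightarrow> (P :: 'q::finite pauli) k \<noteq> PI"
  by (cases "P k") (auto simp: Xop_def Zop_def anticommutes_single_site anticomm1_def)

lemma commutes_Xop_Zop_iff:
  "commutes (Xop k) P \<and> commutes (Zop k) P \<longleftrightarrow> (P :: 'q::finite pauli) k = PI"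
  using anticommutes_Xop_Zop_iff[of P k]
  by (auto simp: commutes_def anticommutes_sym[of "Xop k"] anticommutes_sym[of "Zop k"])

lemma pmul1_PI_right [simp]: "pmul1 a PI = a"
  by (cases a) auto

lemma foldr_pmul_at: "foldr pmul xs pid k = foldr pmul1 (map (\<lambda>x. x k) xs) PI"
  by (induction xs) (simp_all add: pid_def pmul_def)

lemma foldr_pmul1_single:
  assumes "i < length as" and "\<forall>j<length as. j \<noteq> i \<longrightarrow> as ! j = PI"
  shows "foldr pmul1 as PI = as ! i"
  using assms
proof (induction as arbitrary: i)
  case Nil
  then show ?case by simp
next
  case (Cons a as)
  show ?case
  proof (cases i)
    case 0
    have "\<forall>b\<in>set as. b = PI"
    proof
      fix b assume "b \<in> set as"
      then obtain m where "m < length as" and "b = as ! m"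
        by (auto simp: in_set_conv_nth)
      with Cons.prems(2)[rule_format, of "Suc m"] 0 show "b = PI"
        by simp
    qed
    then have "foldr pmul1 as PI = PI"
      by (induction as) auto
    with 0 show ?thesis by simp
  next
    case (Suc m)
    with Cons.prems have "a = PI" and "foldr pmul1 as PI = as ! m"
      by (force intro: Cons.IH)+
    with Suc show ?thesis by simp
  qed
qed

lemma weight_foldr_pmul_ge:
  fixes xs :: "'q::finite pauli list" and f :: "nat \<Rightarrow> 'q"
  assumes own: "\<And>i. i < length xs \<Longrightarrow> (xs ! i) (f i) \<noteq> PI"
    and others: "\<And>i j. i < length xs \<Longrightarrow> j < length xs \<Longrightarrow> j \<noteq> i \<Longrightarrow> (xs ! j) (f i) = PI"
  shows "length xs \<le> weight (foldr pmul xs pid)"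
proof -
  have support: "f ` {..<length xs} \<subseteq> {k. foldr pmul xs pid k \<noteq> PI}"
  proof clarify
    fix i assume "i < length xs" and "foldr pmul xs pid (f i) = PI"
    moreover have "foldr pmul xs pid (f i) = (xs ! i) (f i)"
      using \<open>i < length xs\<close> others by (simp add: foldr_pmul_at foldr_pmul1_single)
    ultimately show False
      using own by simp
  qed
  have "inj_on f {..<length xs}"
    by (rule inj_onI) (metis lessThan_iff own others)
  then have "card (f ` {..<length xs}) = length xs"
    by (simp add: card_image)
  with support show ?thesis
    unfolding weight_def by (metis card_mono finite)
qed

definition separating_qubit :: "'q::finite pauli set set \<Rightarrow> 'q pauli set \<Rightarrow> 'q \<Rightarrow> bool" where
  "separating_qubit G g k \<longleftrightarrow>
     (\<forall>P \<in> gen g - {pid}. anticommutes P (Xop k) \<or> anticommutes P (Zop k)) \<and>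
     (\<forall>P \<in> (\<Union>g'\<in>G - {g}. gen g'). commutes (Xop k) P \<and> commutes (Zop k) P)"

lemma disjoint_pg_iff: "disjoint_pg G \<longleftrightarrow> (\<forall>g\<in>G. \<exists>k. separating_qubit G g k)"
  by (simp add: disjoint_pg_def separating_qubit_def)

lemma separating_qubit_own:
  "separating_qubit G g k \<Longrightarrow> P \<in> gen g \<Longrightarrow> P \<noteq> pid \<Longrightarrow> P k \<noteq> PI"
  by (simp add: separating_qubit_def anticommutes_Xop_Zop_iff)

lemma separating_qubit_other:
  "separating_qubit G g k \<Longrightarrow> g' \<in> G \<Longrightarrow> g' \<noteq> g \<Longrightarrow> P \<in> gen g' \<Longrightarrow> P k = PI"
  unfolding separating_qubit_def commutes_Xop_Zop_iff by blast

theorem lemma12: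
  fixes G :: "'q::finite pauli set set" and hs :: "'q pauli set list"
  assumes "\<forall>g\<in>G. pseudo_generator g"
    and "disjoint_pg G"
    and "set hs \<subseteq> G"
    and "distinct hs"
    and "P \<in> pseudo_product hs"
  shows "weight P \<ge> length hs"
proof -
  obtain xs where P: "P = foldr pmul xs pid"
    and factors: "list_all2 (\<lambda>x g. x \<in> gen g - {pid}) xs hs"
    using assms(5) unfolding pseudo_product_def by blast
  have len: "length xs = length hs"
    using factors by (rule list_all2_lengthD)
  have xs_gen: "\<And>i. i < length hs \<Longrightarrow> xs ! i \<in> gen (hs ! i) - {pid}"
    using factors by (simp add: list_all2_conv_all_nth)
  have hs_G: "\<And>i. i < length hs \<Longrightarrow> hs ! i \<in> G"
    using assms(3) by auto
  have "\<forall>i. \<exists>k. i < length hs \<longrightarrow> separating_qubit G (hs ! i) k"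
    using assms(2) hs_G unfolding disjoint_pg_iff by blast
  then obtain f where f: "\<And>i. i < length hs \<Longrightarrow> separating_qubit G (hs ! i) (f i)"
    by metis
  have "length xs \<le> weight P"
    unfolding P
  proof (rule weight_foldr_pmul_ge)
    show "(xs ! i) (f i) \<noteq> PI" if "i < length xs" for i
      using that len xs_gen[of i] separating_qubit_own[OF f[of i]] by simp
    show "(xs ! j) (f i) = PI" if "i < length xs" "j < length xs" "j \<noteq> i" for i j
      using that len xs_gen[of j] hs_G[of j] assms(4)
      by (auto simp: nth_eq_iff_index_eq intro: separating_qubit_other[OF f[of i]])
  qed
  with len show ?thesis
    by simp
qed

end
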